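(* Let $\mathcal X$ be a nonsingular plane curve of degree $r+1$ and genus $g$ over $\mathbf F_q$ with at least one $\mathbf F_q$-rational point. Let $N$ be an integer with $-1\le N\le 2g-2$. Let $a=\alpha r+\beta$, with $0\le\beta<r$ and $\alpha\ge1$, be a gap of $\mathcal X$ such that $a\le N/2$. Then $$\tilde\ell(a)+\tilde\ell(N-a)\le\tilde\ell(a-r)+\tilde\ell(N-(a-r)).$$
   Context: $\ell(A)=\dim_{\mathbf F_q}\mathcal L(A)$. For $i\ge1$, $\gamma_i=\min\{\deg A: A\ \mathbf F_q\text{-rational divisor},\ \ell(A)\ge i\}$, and $GS(\mathcal X)=\{\gamma_i:i\ge1\}$. For such a plane curve it is known that $GS(\mathcal X)$ is the numerical semigroup generated by $r$ and $r+1$, and that $g=r(r-1)/2$. Let $\mathbf N'=\{-1,0,1,\dots\}$; a gap of $\mathcal X$ is an element of $\mathbf N'\setminus GS(\mathcal X)$. Define $\tilde\ell(-1)=0$ and $\tilde\ell(b)=\max\{i\ge1:\gamma_i\le b\}$ for integers $b\ge0$. *)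

theory Defs
  imports Main "HOL-Library.Infinite_Set"
begin

text \<open>Weierstrass semigroup GS(X) of a nonsingular plane curve of degree r+1:
  the numerical semigroup generated by r and r+1 (as stated in the context).\<close>
definition GS :: "nat \<Rightarrow> nat set" where
  "GS r = {i * r + j * (r + 1) | i j. True}"

text \<open>gamma_i (i \<ge> 1): the i-th smallest element of GS, so gamma_1 = 0.\<close>
definition gamma :: "nat \<Rightarrow> nat \<Rightarrow> int" where
  "gamma r i = int (enumerate (GS r) (i - 1))"

definition is_gap :: "nat \<Rightarrow> int \<Rightarrow> bool" where
  "is_gap r b \<longleftrightarrow> -1 \<le> b \<and> b \<notin> int ` GS r"

definition ell_tilde :: "nat \<Rightarrow> int \<Rightarrow> nat" where
  "ell_tilde r b = (if b < 0 then 0 else Max {i. 1 \<le> i \<and> gamma r i \<le> b})"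

end

theory Submission
  imports Defs
begin

text \<open>
  \<open>ell_tilde r b\<close> counts the elements of the semigroup \<open>GS r = \<langle>r, r + 1\<rangle>\<close> that are
  at most \<open>b\<close>, so \<open>ell_tilde r b - ell_tilde r (b - r)\<close> counts those in the window
  \<open>(b - r, b]\<close>. The elements of \<open>GS r\<close> are exactly the numbers \<open>k r + j\<close> with \<open>j \<le> k\<close>.
  Hence the gap \<open>a = \<alpha> r + \<beta>\<close> has \<open>\<alpha> < \<beta>\<close>, and the window ending at \<open>a\<close> contains
  exactly \<open>\<alpha> r, \<dots>, \<alpha> r + \<alpha>\<close>. The window ending at \<open>N - a + r \<ge> (\<alpha> + 1) r\<close> lies
  so high that, for every residue \<open>\<rho> \<le> \<alpha>\<close>, its element congruent to \<open>\<rho>\<close> modulo \<open>r\<close>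
  has quotient at least \<open>\<alpha>\<close>, hence lies in \<open>GS r\<close>; so it contains at least \<open>\<alpha> + 1\<close>
  elements.
\<close>

lemma enumerate_le_iff_less_card:
  fixes S :: "nat set"
  assumes "infinite S"
  shows "enumerate S n \<le> B \<longleftrightarrow> n < card {s\<in>S. s \<le> B}"
proof
  assume "enumerate S n \<le> B"
  have "enumerate S ` {..n} \<subseteq> {s\<in>S. s \<le> B}"
  proof
    fix s assume "s \<in> enumerate S ` {..n}"
    then obtain m where "m \<le> n" and s: "s = enumerate S m"
      by blast
    then have "s \<le> enumerate S n"
      using assms by simp
    with s \<open>enumerate S n \<le> B\<close> show "s \<in> {s\<in>S. s \<le> B}"
      using enumerate_in_set[OF assms] by simp
  qed
  then have "card (enumerate S ` {..n}) \<le> card {s\<in>S. s \<le> B}"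
    by (rule card_mono[rotated]) simp
  moreover have "card (enumerate S ` {..n}) = Suc n"
    using inj_enumerate[OF assms] by (simp add: card_image inj_on_subset)
  ultimately show "n < card {s\<in>S. s \<le> B}"
    by simp
next
  assume less: "n < card {s\<in>S. s \<le> B}"
  show "enumerate S n \<le> B"
  proof (rule ccontr)
    assume "\<not> enumerate S n \<le> B"
    have "{s\<in>S. s \<le> B} \<subseteq> enumerate S ` {..<n}"
    proof
      fix s assume s: "s \<in> {s\<in>S. s \<le> B}"
      then obtain m where m: "enumerate S m = s"
        using enumerate_Ex[OF assms] by blast
      with s \<open>\<not> enumerate S n \<le> B\<close> have "enumerate S m < enumerate S n"
        by simp
      then have "m < n"
        using assms by simp
      with m show "s \<in> enumerate S ` {..<n}"
        by blast
    qed
    then have "card {s\<in>S. s \<le> B} \<le> card (enumerate S ` {..<n})"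
      by (rule card_mono[rotated]) simp
    also have "\<dots> \<le> n"
      using card_image_le[of "{..<n}" "enumerate S"] by simp
    finally show False
      using less by simp
  qed
qed

lemma GS_infinite: "infinite (GS r)"
proof -
  have "range (\<lambda>j. j * (r + 1)) \<subseteq> GS r"
  proof
    fix x assume "x \<in> range (\<lambda>j. j * (r + 1))"
    then obtain j where "x = 0 * r + j * (r + 1)"
      by auto
    then show "x \<in> GS r"
      unfolding GS_def by blast
  qed
  moreover have "inj (\<lambda>j::nat. j * (r + 1))"
    by (rule injI) (metis add_is_0 mult_cancel2 one_neq_zero)
  ultimately show ?thesis
    by (meson infinite_super range_inj_infinite)
qed

lemma zero_in_GS: "0 \<in> GS r"
  unfolding GS_def by (intro CollectI exI[of _ 0]) simp

lemma mem_GS_iff: "s \<in> GS r \<longleftrightarrow> (\<exists>k j. j \<le> k \<and> s = k * r + j)"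
proof
  assume "s \<in> GS r"
  then obtain i j where "s = i * r + j * (r + 1)"
    unfolding GS_def by auto
  then show "\<exists>k j. j \<le> k \<and> s = k * r + j"
    by (intro exI[of _ "i + j"] exI[of _ j]) (simp add: algebra_simps)
next
  assume "\<exists>k j. j \<le> k \<and> s = k * r + j"
  then obtain k j where "j \<le> k" "s = k * r + j"
    by blast
  then have "s = (k - j) * r + j * (r + 1)"
    by (simp add: algebra_simps diff_mult_distrib)
  then show "s \<in> GS r"
    unfolding GS_def by blast
qed

lemma ell_tilde_eq_card: "ell_tilde r b = card {s\<in>GS r. int s \<le> b}"
proof (cases "b < 0")
  case True
  then have "{s\<in>GS r. int s \<le> b} = {}"
    by auto
  with True show ?thesis
    unfolding ell_tilde_def by simp
next
  case False
  then have le_b_iff: "int n \<le> b \<longleftrightarrow> n \<le> nat b" for n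
    by (simp add: le_nat_iff)
  define c where "c = card {s\<in>GS r. s \<le> nat b}"
  have "0 \<in> {s\<in>GS r. s \<le> nat b}"
    using zero_in_GS by simp
  then have "0 < c"
    unfolding c_def by (auto simp: card_gt_0_iff)
  have gamma_le_iff: "gamma r i \<le> b \<longleftrightarrow> i - 1 < c" for i
    unfolding gamma_def le_b_iff c_def by (rule enumerate_le_iff_less_card[OF GS_infinite])
  have "1 \<le> i \<and> gamma r i \<le> b \<longleftrightarrow> i \<in> {1..c}" for i
    unfolding gamma_le_iff by auto
  then have "{i. 1 \<le> i \<and> gamma r i \<le> b} = {1..c}"
    by blast
  then have "ell_tilde r b = Max {1..c}"
    using False unfolding ell_tilde_def by simp
  also have "\<dots> = c"
    using \<open>0 < c\<close> by (intro Max_eqI) auto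
  finally show ?thesis
    unfolding c_def le_b_iff .
qed

text \<open>The window \<open>(x - r, x]\<close>, written without truncated subtraction.\<close>

definition GS_window :: "nat \<Rightarrow> nat \<Rightarrow> nat set" where
  "GS_window r x = {s\<in>GS r. x < s + r \<and> s \<le> x}"

lemma ell_tilde_eq_window:
  assumes "0 \<le> b"
  shows "ell_tilde r b = ell_tilde r (b - int r) + card (GS_window r (nat b))"
proof -
  have "{s\<in>GS r. int s \<le> b}
          = {s\<in>GS r. int s \<le> b - int r} \<union> GS_window r (nat b)"
    unfolding GS_window_def using assms by auto
  moreover have "finite (GS_window r (nat b))"
    unfolding GS_window_def by simp
  moreover have "finite {s\<in>GS r. int s \<le> b - int r}"
    by (rule finite_subset[of _ "{..nat b}"]) auto
  moreover have "{s\<in>GS r. int s \<le> b - int r} \<inter> GS_window r (nat b) = {}"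
    unfolding GS_window_def using assms by auto
  ultimately show ?thesis
    unfolding ell_tilde_eq_card by (simp add: card_Un_disjoint)
qed

lemma gap_quotient_less_remainder:
  assumes "is_gap r (int (\<alpha> * r + \<beta>))"
  shows "\<alpha> < \<beta>"
proof (rule ccontr)
  assume "\<not> \<alpha> < \<beta>"
  then have "\<alpha> * r + \<beta> \<in> GS r"
    unfolding mem_GS_iff by (intro exI[of _ \<alpha>] exI[of _ \<beta>]) simp
  with assms show False
    unfolding is_gap_def by blast
qed

lemma GS_window_at_gap:
  assumes "\<alpha> < \<beta>" and "\<beta> < r"
  shows "GS_window r (\<alpha> * r + \<beta>) = (\<lambda>j. \<alpha> * r + j) ` {..\<alpha>}"
proof
  show "(\<lambda>j. \<alpha> * r + j) ` {..\<alpha>} \<subseteq> GS_window r (\<alpha> * r + \<beta>)"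
  proof
    fix s assume "s \<in> (\<lambda>j. \<alpha> * r + j) ` {..\<alpha>}"
    then obtain j where j: "j \<le> \<alpha>" "s = \<alpha> * r + j"
      by blast
    then have "s \<in> GS r"
      unfolding mem_GS_iff by blast
    moreover have "\<alpha> * r + \<beta> < s + r" "s \<le> \<alpha> * r + \<beta>"
      using j assms by auto
    ultimately show "s \<in> GS_window r (\<alpha> * r + \<beta>)"
      unfolding GS_window_def by blast
  qed
next
  show "GS_window r (\<alpha> * r + \<beta>) \<subseteq> (\<lambda>j. \<alpha> * r + j) ` {..\<alpha>}"
  proof
    fix s assume "s \<in> GS_window r (\<alpha> * r + \<beta>)"
    then obtain k j where kj: "j \<le> k" "s = k * r + j"
      and lower: "\<alpha> * r + \<beta> < s + r" and upper: "s \<le> \<alpha> * r + \<beta>"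
      unfolding GS_window_def mem_GS_iff by blast
    have "k * r < (\<alpha> + 1) * r"
      using kj upper assms(2) by simp
    then have "k < \<alpha> + 1"
      by (rule mult_less_cancel2[THEN iffD1, THEN conjunct2])
    then have "k \<le> \<alpha>"
      by simp
    moreover have "\<not> k < \<alpha>"
    proof
      assume "k < \<alpha>"
      then have "(k + 1) * r \<le> \<alpha> * r"
        by (intro mult_le_mono1) simp
      then show False
        using kj lower \<open>k < \<alpha>\<close> assms(1) by simp
    qed
    ultimately show "s \<in> (\<lambda>j. \<alpha> * r + j) ` {..\<alpha>}"
      using kj by auto
  qed
qed

lemma card_GS_window_ge:
  assumes "\<alpha> < r" and "(\<alpha> + 1) * r \<le> x"
  shows "\<alpha> + 1 \<le> card (GS_window r x)"
proof -
  define t where "t \<rho> = (x - \<rho>) div r * r + \<rho>" for \<rho>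
  have t_in_window: "t \<rho> \<in> GS_window r x" if "\<rho> \<le> \<alpha>" for \<rho>
  proof -
    have "\<rho> + \<alpha> * r < x"
      using assms that by (simp add: algebra_simps)
    then have "\<alpha> * r \<le> x - \<rho>"
      by linarith
    then have "\<rho> * r \<le> x - \<rho>"
      using that by (meson le_trans mult_le_mono1)
    then have "\<rho> \<le> (x - \<rho>) div r"
      using assms(1) by (simp add: less_eq_div_iff_mult_less_eq)
    then have "t \<rho> \<in> GS r"
      unfolding mem_GS_iff t_def by blast
    moreover have "t \<rho> \<le> x"
      using div_times_less_eq_dividend[of "x - \<rho>" r] \<open>\<rho> + \<alpha> * r < x\<close>
      unfolding t_def by linarith
    moreover have "x < t \<rho> + r"
      using div_mult_mod_eq[of "x - \<rho>" r] mod_less_divisor[of r "x - \<rho>"] assms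
      unfolding t_def by linarith
    ultimately show ?thesis
      unfolding GS_window_def by blast
  qed
  have "inj_on t {..\<alpha>}"
  proof (rule inj_on_inverseI)
    show "t \<rho> mod r = \<rho>" if "\<rho> \<in> {..\<alpha>}" for \<rho>
      using that assms(1) unfolding t_def by simp
  qed
  then have "card (t ` {..\<alpha>}) = \<alpha> + 1"
    by (simp add: card_image)
  moreover have "card (t ` {..\<alpha>}) \<le> card (GS_window r x)"
    using t_in_window unfolding GS_window_def by (intro card_mono) auto
  ultimately show ?thesis
    by simp
qed

theorem lemma3p14:
  fixes r \<alpha> \<beta> :: nat and g N a :: int
  assumes "g = int (r * (r - 1) div 2)"
    and "-1 \<le> N" and "N \<le> 2 * g - 2"
    and "a = int (\<alpha> * r + \<beta>)" and "\<beta> < r" and "1 \<le> \<alpha>"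
    and "is_gap r a" and "2 * a \<le> N"
  shows "ell_tilde r a + ell_tilde r (N - a)
           \<le> ell_tilde r (a - int r) + ell_tilde r (N - (a - int r))"
proof -
  have "\<alpha> < \<beta>"
    using assms(4,7) gap_quotient_less_remainder by blast
  have "0 \<le> a" and "nat a = \<alpha> * r + \<beta>"
    unfolding assms(4) by (simp, rule nat_int)
  then have "ell_tilde r a = ell_tilde r (a - int r) + (\<alpha> + 1)"
    using ell_tilde_eq_window GS_window_at_gap[OF \<open>\<alpha> < \<beta>\<close> assms(5)]
    by (simp add: card_image)
  moreover have "ell_tilde r (N - a) + (\<alpha> + 1) \<le> ell_tilde r (N - (a - int r))"
  proof -
    have "int ((\<alpha> + 1) * r) \<le> N - (a - int r)"
      using assms(4,8) by (simp add: algebra_simps)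
    then have "\<alpha> + 1 \<le> card (GS_window r (nat (N - (a - int r))))"
      using \<open>\<alpha> < \<beta>\<close> assms(5) by (intro card_GS_window_ge) linarith+
    moreover have "0 \<le> N - (a - int r)"
      using \<open>0 \<le> a\<close> assms(8) by linarith
    ultimately show ?thesis
      using ell_tilde_eq_window[of "N - (a - int r)" r] by simp
  qed
  ultimately show ?thesis
    by linarith
qed

end
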